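(* Let $(x,y)$ be a $\delta$-feasible assignment, let $\mathcal{F}$ be an acyclic $y$-flow from $S$ to $T$ (with respect to $(x,y)$), and let $(x',y')$ be the result of chain shifting $(x,y)$ according to $\mathcal{F}$. Let $d$ be the largest value of $\mathrm{dist}_G(u,w)$ over arcs $(u,w)$ of $G_{\mathcal{F}}$. Then $(x',y')$ is $(\delta+d)$-feasible; every vertex $v$ of indegree zero in $G_{\mathcal{F}}$ satisfies $\mathrm{radius}_{(x',y')}(v)\le\mathrm{radius}_{(x,y)}(v)$; every other vertex $v$ satisfies $\mathrm{radius}_{(x',y')}(v)\le\max\big(\mathrm{radius}_{(x,y)}(v),\ \max_{a\in N^{in}_{G_\mathcal{F}}(v)}(\mathrm{radius}_{(x,y)}(a)+\mathrm{dist}_G(a,v))\big)$; and $y'_v=y_v$ for every $v\in V\setminus(S\cup T)$.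
   Context: $G=(V,E)$ undirected unweighted, $\mathrm{dist}_G$ shortest-path distance, $L:V\to\mathbb{N}$, $k$ a positive integer. An assignment is $x:V\times V\to\mathbb{R}_{\ge0}$, $y:V\to\mathbb{R}_{\ge0}$; it is $\delta$-feasible if (1) $\sum_u y_u=k$; (2) $x_{u,v}\le y_u$; (3) $\sum_v x_{u,v}\le L(u)y_u$; (4) $\sum_u x_{u,v}=1$; (5) $0\le y_u\le1$; (6) $x_{u,v}=0$ whenever $\mathrm{dist}_G(u,v)>\delta$; (7) $x_{u,v}\ge0$. $\mathrm{radius}_{(x,y)}(u)$ is the largest integer $i$ such that some $v$ has $\mathrm{dist}_G(v,u)=i$ and $x_{u,v}>0$ ($0$ if none). $y$-flow: for an assignment $(x,y)$ and disjoint $S,T\subseteq V$, a $y$-flow from $S$ to $T$ is a finite collection $\mathcal{F}$ of paths $(\alpha,v_1,\dots,v_t)$ with $\alpha>0$ real, $v_1\in S$, $v_t\in T$, $L(v_1)\le L(v_t)$, and for $2\le i\le t-1$: $v_i\notin S\cup T$, $y_{v_i}=1$, $L(v_i)\ge L(v_1)$ (such a path transfers $\alpha$ from $v_1$ to $v_t$ through $v_2,\dots,v_{t-1}$), such that: for each $v\in S$ the total amount transferred from $v$ is at most $y_v$; for each $v\in T$ the total transferred to $v$ is at most $1-y_v$; for each $v\notin S\cup T$ the total transferred through $v$ is at most $1$. $G_{\mathcal{F}}=(V,A)$ is the directed graph with arc $(u,w)$ iff some path of $\mathcal{F}$ contains $u,w$ as consecutive vertices in this order; $\mathcal{F}$ is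 acyclic iff $G_{\mathcal{F}}$ is acyclic. $f_{\mathcal{F}}(u,w)$ is the sum of $\alpha$ over paths containing $u,w$ consecutively; $fl_{\mathcal{F}}(u,w)$ is the sum of $L(v_1)\alpha$ over such paths $(\alpha,v_1,\dots)$. $N^{in}_{G_\mathcal{F}}(v)=\{u:(u,v)\in A\}$. Chain shifting of $(x,y)$ according to acyclic $\mathcal{F}$: set $\Delta_{u,v}=0$ for all $u,v$; for each arc $(u,a)\in A$ in reverse topological order of $G_\mathcal{F}$ and each $v\in V$, let $\Delta=x_{u,v}\,fl_\mathcal{F}(u,a)/(L(u)y_u)$ and set $\Delta_{a,v}\mathrel{+}=\Delta$, $\Delta_{u,v}\mathrel{-}=\Delta$; then set $x_{u,v}\mathrel{+}=\Delta_{u,v}$ for all $u,v$; for each $s\in S$ decrease $y_s$ by $\sum_{(s,u)\in A}f_\mathcal{F}(s,u)$; for each $t\in T$ increase $y_t$ by $\sum_{(u,t)\in A}f_\mathcal{F}(u,t)$. *)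

theory Defs
  imports Main "HOL-Library.Extended_Nat"
begin

text \<open>The graph G has vertex set UNIV of a finite type 'a and a symmetric edge
relation E. Distances are extended naturals (infinity if unreachable).\<close>

definition gdist :: "('a \<Rightarrow> 'a \<Rightarrow> bool) \<Rightarrow> 'a \<Rightarrow> 'a \<Rightarrow> enat" where
  "gdist E u v = Inf {enat n | n. (u, v) \<in> {(a, b). E a b} ^^ n}"

definition feasible ::
  "('a::finite \<Rightarrow> 'a \<Rightarrow> bool) \<Rightarrow> ('a \<Rightarrow> nat) \<Rightarrow> nat \<Rightarrow> enat
   \<Rightarrow> ('a \<Rightarrow> 'a \<Rightarrow> real) \<Rightarrow> ('a \<Rightarrow> real) \<Rightarrow> bool" where
  "feasible E L k \<delta> x y \<longleftrightarrow>
     (\<Sum>u\<in>UNIV. y u) = real k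
   \<and> (\<forall>u v. x u v \<le> y u)
   \<and> (\<forall>u. (\<Sum>v\<in>UNIV. x u v) \<le> real (L u) * y u)
   \<and> (\<forall>v. (\<Sum>u\<in>UNIV. x u v) = 1)
   \<and> (\<forall>u. 0 \<le> y u \<and> y u \<le> 1)
   \<and> (\<forall>u v. gdist E u v > \<delta> \<longrightarrow> x u v = 0)
   \<and> (\<forall>u v. 0 \<le> x u v)"

definition radius ::
  "('a::finite \<Rightarrow> 'a \<Rightarrow> bool) \<Rightarrow> ('a \<Rightarrow> 'a \<Rightarrow> real) \<Rightarrow> 'a \<Rightarrow> nat" where
  "radius E x u = Max ({0} \<union> {i. \<exists>v. gdist E v u = enat i \<and> x u v > 0})"

text \<open>A flow is a finite collection (list, so multiplicities are allowed) of paths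
  (alpha, [v_1, ..., v_t]).\<close>
type_synonym 'a flow = "(real \<times> 'a list) list"

definition valid_path ::
  "('a \<Rightarrow> nat) \<Rightarrow> ('a \<Rightarrow> real) \<Rightarrow> 'a set \<Rightarrow> 'a set \<Rightarrow> real \<times> 'a list \<Rightarrow> bool" where
  "valid_path L y S T p \<longleftrightarrow> (case p of (\<alpha>, vs) \<Rightarrow>
      \<alpha> > 0 \<and> vs \<noteq> [] \<and> hd vs \<in> S \<and> last vs \<in> T \<and> L (hd vs) \<le> L (last vs)
    \<and> (\<forall>i. 1 \<le> i \<and> i + 1 < length vs \<longrightarrow>
          vs ! i \<notin> S \<union> T \<and> y (vs ! i) = 1 \<and> L (vs ! i) \<ge> L (hd vs)))"

definition y_flow ::
  "('a \<Rightarrow> nat) \<Rightarrow> ('a \<Rightarrow> real) \<Rightarrow> 'a set \<Rightarrow> 'a set \<Rightarrow> 'a flow \<Rightarrow> bool" where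
  "y_flow L y S T F \<longleftrightarrow>
     (\<forall>p\<in>set F. valid_path L y S T p)
   \<and> (\<forall>v\<in>S. sum_list (map (\<lambda>(\<alpha>, vs). if hd vs = v then \<alpha> else 0) F) \<le> y v)
   \<and> (\<forall>v\<in>T. sum_list (map (\<lambda>(\<alpha>, vs). if last vs = v then \<alpha> else 0) F) \<le> 1 - y v)
   \<and> (\<forall>v. v \<notin> S \<union> T \<longrightarrow>
        sum_list (map (\<lambda>(\<alpha>, vs). \<alpha> * real (count_list vs v)) F) \<le> 1)"

definition consec :: "'a list \<Rightarrow> 'a \<Rightarrow> 'a \<Rightarrow> bool" where
  "consec vs u w \<longleftrightarrow> (\<exists>i. Suc i < length vs \<and> vs ! i = u \<and> vs ! Suc i = w)"

definition arc :: "'a flow \<Rightarrow> 'a \<Rightarrow> 'a \<Rightarrow> bool" where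
  "arc F u w \<longleftrightarrow> (\<exists>(\<alpha>, vs)\<in>set F. consec vs u w)"

definition flow_acyclic :: "'a flow \<Rightarrow> bool" where
  "flow_acyclic F \<longleftrightarrow> acyclic {(u, w). arc F u w}"

definition fF :: "'a flow \<Rightarrow> 'a \<Rightarrow> 'a \<Rightarrow> real" where
  "fF F u w = sum_list (map (\<lambda>(\<alpha>, vs). if consec vs u w then \<alpha> else 0) F)"

definition flF :: "('a \<Rightarrow> nat) \<Rightarrow> 'a flow \<Rightarrow> 'a \<Rightarrow> 'a \<Rightarrow> real" where
  "flF L F u w = sum_list (map (\<lambda>(\<alpha>, vs). if consec vs u w then real (L (hd vs)) * \<alpha> else 0) F)"

text \<open>In the procedure, each arc (u,a) is processed once and the
  increment Delta = x_{u,v} fl(u,a) / (L(u) y_u) uses the original x, so the final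
  accumulated Delta is the following closed form (independent of the processing order).\<close>
definition shift_x ::
  "('a::finite \<Rightarrow> nat) \<Rightarrow> 'a flow \<Rightarrow> ('a \<Rightarrow> 'a \<Rightarrow> real) \<Rightarrow> ('a \<Rightarrow> real) \<Rightarrow> 'a \<Rightarrow> 'a \<Rightarrow> real" where
  "shift_x L F x y w v =
     x w v
     + (\<Sum>u\<in>{u. arc F u w}. x u v * flF L F u w / (real (L u) * y u))
     - (\<Sum>a\<in>{a. arc F w a}. x w v * flF L F w a / (real (L w) * y w))"

definition shift_y ::
  "'a::finite set \<Rightarrow> 'a set \<Rightarrow> 'a flow \<Rightarrow> ('a \<Rightarrow> real) \<Rightarrow> 'a \<Rightarrow> real" where
  "shift_y S T F y v =
     (if v \<in> S then y v - (\<Sum>u\<in>{u. arc F v u}. fF F v u)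
      else if v \<in> T then y v + (\<Sum>u\<in>{u. arc F u v}. fF F u v)
      else y v)"

end

theory Submission
  imports Defs
begin

text \<open>
  Chain shifting moves, along every arc (u, w) of the flow graph G_F, the fraction
  share u w = fl(u, w) / (L(u) y(u)) of the assignment of u over to w.  The proof rests on
  a closed form of the shifted assignment: w keeps the fraction 1 - out_share w of its
  own assignment, where out_share w is the total fraction it passes on, and receives the
  fraction share u w of the assignment of each in-neighbour u.
\<close>

section \<open>Graph distances and radii\<close>

lemma gdist_le_relpow: "(u, v) \<in> {(a, b). E a b} ^^ n \<Longrightarrow> gdist E u v \<le> enat n"
  unfolding gdist_def by (rule Inf_lower) blast

lemma relpow_of_gdist:
  assumes "gdist E u v = enat n"
  shows "(u, v) \<in> {(a, b). E a b} ^^ n"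
proof -
  let ?A = "{enat n | n. (u, v) \<in> {(a, b). E a b} ^^ n}"
  have "?A \<noteq> {}"
  proof
    assume "?A = {}"
    then have "gdist E u v = \<infinity>"
      unfolding gdist_def by (simp add: Inf_enat_def)
    then show False
      using assms by simp
  qed
  then obtain m where "m \<in> ?A"
    by blast
  then have "Inf ?A \<in> ?A"
    by (rule wellorder_InfI)
  then show ?thesis
    using assms unfolding gdist_def by auto
qed

lemma relpow_symp:
  assumes "symp E" and "(u, v) \<in> {(a, b). E a b} ^^ n"
  shows "(v, u) \<in> {(a, b). E a b} ^^ n"
  using assms(2)
proof (induction n arbitrary: v)
  case 0
  then show ?case by simp
next
  case (Suc n)
  then obtain w where "(u, w) \<in> {(a, b). E a b} ^^ n" and "E w v"
    by auto
  then have "(v, w) \<in> {(a, b). E a b}" and "(w, u) \<in> {(a, b). E a b} ^^ n"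
    using Suc.IH assms(1) by (auto dest: sympD)
  then show ?case
    by (rule relpow_Suc_I2)
qed

lemma gdist_sym:
  assumes "symp E"
  shows "gdist E u v = gdist E v u"
proof -
  have "{enat n | n. (u, v) \<in> {(a, b). E a b} ^^ n} = {enat n | n. (v, u) \<in> {(a, b). E a b} ^^ n}"
    using relpow_symp[OF assms] by blast
  then show ?thesis
    unfolding gdist_def by simp
qed

text \<open>Concatenating walks gives the triangle inequality.\<close>
lemma gdist_triangle: "gdist E u v \<le> gdist E u w + gdist E w v"
proof (cases "gdist E u w = \<infinity> \<or> gdist E w v = \<infinity>")
  case True
  then show ?thesis by auto
next
  case False
  then obtain m n where m: "gdist E u w = enat m" and n: "gdist E w v = enat n"
    by auto
  have "(u, v) \<in> {(a, b). E a b} ^^ (m + n)"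
    using relpow_of_gdist[OF m] relpow_of_gdist[OF n] by (auto simp: relpow_add)
  then have "gdist E u v \<le> enat (m + n)"
    by (rule gdist_le_relpow)
  then show ?thesis
    using m n by simp
qed

text \<open>Distances to a fixed vertex take finitely many finite values, so the maximum in
  the definition of the radius is attained and bounds every assigned distance.\<close>
lemma finite_dist_values:
  "finite {i. \<exists>w::'a::finite. gdist E w v = enat i \<and> P w}"
proof -
  have "{i. \<exists>w. gdist E w v = enat i \<and> P w} \<subseteq> range (\<lambda>w. the_enat (gdist E w v))"
  proof
    fix i
    assume "i \<in> {i. \<exists>w. gdist E w v = enat i \<and> P w}"
    then obtain w where "gdist E w v = enat i"
      by blast
    then show "i \<in> range (\<lambda>w. the_enat (gdist E w v))"
      by (metis rangeI the_enat.simps)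
  qed
  then show ?thesis
    by (rule finite_subset) simp
qed

lemma radius_ge:
  assumes "0 < x u v" and "gdist E v u = enat i"
  shows "i \<le> radius E x u"
  unfolding radius_def by (rule Max_ge) (use assms finite_dist_values in auto)

lemma radius_attained:
  "radius E x u = 0 \<or> (\<exists>v. gdist E v u = enat (radius E x u) \<and> 0 < x u v)"
proof -
  have "radius E x u \<in> {0} \<union> {i. \<exists>v. gdist E v u = enat i \<and> 0 < x u v}"
    unfolding radius_def by (rule Max_in) (use finite_dist_values in auto)
  then show ?thesis by blast
qed

lemma radius_mono_support:
  fixes x x' :: "'a::finite \<Rightarrow> 'a \<Rightarrow> real"
  assumes "\<And>v. 0 < x' u v \<Longrightarrow> 0 < x u v"
  shows "radius E x' u \<le> radius E x u"
proof -
  consider "radius E x' u = 0" | v where "gdist E v u = enat (radius E x' u)" and "0 < x' u v"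
    using radius_attained[of E x' u] by auto
  then show ?thesis
  proof cases
    case 1
    then show ?thesis by simp
  next
    case 2
    then show ?thesis
      using radius_ge[of x u, OF assms] by blast
  qed
qed

section \<open>Weighted paths and consecutive vertices\<close>

lemma sum_sum_list_swap:
  "finite A \<Longrightarrow> (\<Sum>a\<in>A. sum_list (map (f a) xs)) = sum_list (map (\<lambda>p. \<Sum>a\<in>A. f a p) xs)"
  by (induction xs) (auto simp: sum.distrib)

lemma sum_list_weighted_count:
  fixes g :: "real \<Rightarrow> 'a list \<Rightarrow> real" and A :: "'b::finite set"
  assumes "\<And>\<alpha> vs. (\<alpha>, vs) \<in> set F \<Longrightarrow> {a. P vs a} \<subseteq> A"
  shows "(\<Sum>a\<in>A. sum_list (map (\<lambda>(\<alpha>, vs). if P vs a then g \<alpha> vs else 0) F))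
       = sum_list (map (\<lambda>(\<alpha>, vs). g \<alpha> vs * card {a. P vs a}) F)"
proof -
  have per_path: "(\<Sum>a\<in>A. if P vs a then g \<alpha> vs else 0) = g \<alpha> vs * card {a. P vs a}"
    if "(\<alpha>, vs) \<in> set F" for \<alpha> vs
  proof -
    have "{a \<in> A. P vs a} = {a. P vs a}"
      using assms[OF that] by blast
    then show ?thesis
      using sum.inter_filter[of A "\<lambda>_. g \<alpha> vs" "P vs", symmetric] by (simp add: mult.commute)
  qed
  have "(\<Sum>a\<in>A. sum_list (map (\<lambda>(\<alpha>, vs). if P vs a then g \<alpha> vs else 0) F))
      = sum_list (map (\<lambda>p. \<Sum>a\<in>A. case p of (\<alpha>, vs) \<Rightarrow> if P vs a then g \<alpha> vs else 0) F)"
    by (rule sum_sum_list_swap) simp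
  also have "\<dots> = sum_list (map (\<lambda>(\<alpha>, vs). g \<alpha> vs * card {a. P vs a}) F)"
    by (rule arg_cong[where f = sum_list], rule map_cong) (auto simp: per_path)
  finally show ?thesis .
qed

lemma card_consec_successors:
  assumes "distinct vs"
  shows "card {a. consec vs w a} = (if w \<in> set vs \<and> w \<noteq> last vs then 1 else 0)"
proof (cases "w \<in> set vs")
  case True
  then obtain i where i: "i < length vs" "vs ! i = w"
    by (auto simp: in_set_conv_nth)
  have "{a. consec vs w a} = (if Suc i < length vs then {vs ! Suc i} else {})"
    unfolding consec_def using i assms by (auto simp: nth_eq_iff_index_eq)
  moreover have "w \<noteq> last vs \<longleftrightarrow> Suc i < length vs"
    using i assms by (cases "vs = []") (auto simp: last_conv_nth nth_eq_iff_index_eq)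
  ultimately show ?thesis
    using True i by auto
next
  case False
  then have "{a. consec vs w a} = {}"
    unfolding consec_def in_set_conv_nth using Suc_lessD by blast
  then show ?thesis
    using False by simp
qed

lemma card_consec_predecessors:
  assumes "distinct vs"
  shows "card {u. consec vs u w} = (if w \<in> set vs \<and> w \<noteq> hd vs then 1 else 0)"
proof (cases "w \<in> set vs")
  case True
  then obtain i where i: "i < length vs" "vs ! i = w"
    by (auto simp: in_set_conv_nth)
  have "{u. consec vs u w} = (if 0 < i then {vs ! (i - 1)} else {})"
    unfolding consec_def using i assms
    by (auto simp: nth_eq_iff_index_eq) (metis Suc_lessD Suc_pred)
  moreover have "w \<noteq> hd vs \<longleftrightarrow> 0 < i"
    using i assms by (cases "vs = []") (auto simp: hd_conv_nth nth_eq_iff_index_eq)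
  ultimately show ?thesis
    using True i by auto
next
  case False
  then have "{u. consec vs u w} = {}"
    unfolding consec_def by (auto simp: in_set_conv_nth)
  then show ?thesis
    using False by simp
qed

section \<open>Acyclic y-flows\<close>

locale acyclic_y_flow =
  fixes L :: "'a::finite \<Rightarrow> nat" and y :: "'a \<Rightarrow> real"
    and S T :: "'a set" and F :: "'a flow"
  assumes disjoint: "S \<inter> T = {}"
    and y_flow: "y_flow L y S T F"
    and acyclic: "flow_acyclic F"
begin

lemma path_valid:
  assumes "(\<alpha>, vs) \<in> set F"
  shows "0 < \<alpha>" and "vs \<noteq> []" and "hd vs \<in> S" and "last vs \<in> T"
    and "\<And>i. 1 \<le> i \<Longrightarrow> i + 1 < length vs \<Longrightarrow>
           vs ! i \<notin> S \<union> T \<and> y (vs ! i) = 1 \<and> L (hd vs) \<le> L (vs ! i)"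
proof -
  have "valid_path L y S T (\<alpha>, vs)"
    using y_flow assms unfolding y_flow_def by blast
  then show "0 < \<alpha>" "vs \<noteq> []" "hd vs \<in> S" "last vs \<in> T"
    "\<And>i. 1 \<le> i \<Longrightarrow> i + 1 < length vs \<Longrightarrow>
       vs ! i \<notin> S \<union> T \<and> y (vs ! i) = 1 \<and> L (hd vs) \<le> L (vs ! i)"
    unfolding valid_path_def by auto
qed

lemma path_ends_differ: "(\<alpha>, vs) \<in> set F \<Longrightarrow> hd vs \<noteq> last vs"
  using path_valid(3,4)[of \<alpha> vs] disjoint by auto

text \<open>Later vertices of a path are reachable from earlier ones in G_F; acyclicity thus
  makes every path simple and G_F irreflexive.\<close>
lemma path_in_arcs_trancl:
  assumes "(\<alpha>, vs) \<in> set F" and "i < j" and "j < length vs"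
  shows "(vs ! i, vs ! j) \<in> {(u, w). arc F u w}\<^sup>+"
  using assms(2,3)
proof (induction j)
  case 0
  then show ?case by simp
next
  case (Suc j)
  have step: "arc F (vs ! j) (vs ! Suc j)"
    unfolding arc_def consec_def using assms(1) Suc.prems by blast
  show ?case
  proof (cases "i = j")
    case True
    then show ?thesis using step by auto
  next
    case False
    then have "(vs ! i, vs ! j) \<in> {(u, w). arc F u w}\<^sup>+"
      using Suc by auto
    then show ?thesis
      using step by (simp add: trancl_into_trancl)
  qed
qed

lemma path_distinct:
  assumes "(\<alpha>, vs) \<in> set F"
  shows "distinct vs"
proof (rule ccontr)
  assume "\<not> distinct vs"
  then obtain i j where "i < j" and "j < length vs" and "vs ! i = vs ! j"
    by (metis distinct_conv_nth linorder_neqE_nat)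
  then have "(vs ! i, vs ! i) \<in> {(u, w). arc F u w}\<^sup>+"
    using path_in_arcs_trancl[OF assms] by metis
  then show False
    using acyclic unfolding flow_acyclic_def acyclic_def by blast
qed

lemma arc_irreflexive: "\<not> arc F w w"
  using acyclic unfolding flow_acyclic_def acyclic_def by blast

lemma path_position_cases:
  assumes p: "(\<alpha>, vs) \<in> set F" and i: "i < length vs"
  shows "(i = 0 \<and> vs ! i \<in> S) \<or> (i = length vs - 1 \<and> vs ! i \<in> T) \<or>
    (0 < i \<and> i + 1 < length vs \<and> vs ! i \<notin> S \<union> T \<and> y (vs ! i) = 1 \<and> L (hd vs) \<le> L (vs ! i))"
proof -
  consider "i = 0" | "i = length vs - 1" | "1 \<le> i \<and> i + 1 < length vs"
    using i by linarith
  then show ?thesis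
  proof cases
    case 1
    then show ?thesis using path_valid(2,3)[OF p] by (simp add: hd_conv_nth)
  next
    case 2
    then show ?thesis using path_valid(2,4)[OF p] by (simp add: last_conv_nth)
  next
    case 3
    then show ?thesis using path_valid(5)[OF p] by auto
  qed
qed

lemma consec_capacity:
  assumes p: "(\<alpha>, vs) \<in> set F" and c: "consec vs u w"
  shows "L (hd vs) \<le> L u" and "L (hd vs) \<le> L w"
proof -
  obtain j where j: "Suc j < length vs" "vs ! j = u" "vs ! Suc j = w"
    using c unfolding consec_def by auto
  have last_ok: "L (hd vs) \<le> L (last vs)"
    using y_flow p unfolding y_flow_def valid_path_def by fastforce
  show "L (hd vs) \<le> L u"
    using path_position_cases[OF p, of j] j path_valid(2)[OF p] by (auto simp: hd_conv_nth)
  show "L (hd vs) \<le> L w"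
    using path_position_cases[OF p, of "Suc j"] j path_valid(2)[OF p] last_ok
    by (auto simp: last_conv_nth)
qed

lemma consec_endpoints:
  assumes p: "(\<alpha>, vs) \<in> set F" and c: "consec vs u w"
  shows "w \<notin> S" and "u \<notin> T" and "w \<notin> S \<union> T \<Longrightarrow> y w = 1" and "u \<notin> S \<union> T \<Longrightarrow> y u = 1"
proof -
  obtain j where j: "Suc j < length vs" "vs ! j = u" "vs ! Suc j = w"
    using c unfolding consec_def by auto
  show "w \<notin> S" "w \<notin> S \<union> T \<Longrightarrow> y w = 1"
    using path_position_cases[OF p, of "Suc j"] j disjoint by auto
  show "u \<notin> T" "u \<notin> S \<union> T \<Longrightarrow> y u = 1"
    using path_position_cases[OF p, of j] j disjoint by auto
qed

lemma arc_endpoints: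
  assumes "arc F u w"
  shows "w \<notin> S" and "u \<notin> T" and "w \<notin> S \<union> T \<Longrightarrow> y w = 1" and "u \<notin> S \<union> T \<Longrightarrow> y u = 1"
  using assms consec_endpoints unfolding arc_def by fast+

lemma path_source_at_head:
  assumes p: "(\<alpha>, vs) \<in> set F" and "w \<in> S" and "w \<in> set vs"
  shows "w = hd vs"
proof -
  obtain i where i: "i < length vs" "vs ! i = w"
    using assms(3) by (auto simp: in_set_conv_nth)
  then have "i = 0"
    using path_position_cases[OF p i(1)] disjoint assms(2) by auto
  then show ?thesis
    using i by (auto simp: hd_conv_nth)
qed

lemma path_sink_at_last:
  assumes p: "(\<alpha>, vs) \<in> set F" and "w \<in> T" and "w \<in> set vs"
  shows "w = last vs"
proof -
  obtain i where i: "i < length vs" "vs ! i = w"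
    using assms(3) by (auto simp: in_set_conv_nth)
  then have "i = length vs - 1"
    using path_position_cases[OF p i(1)] disjoint assms(2) by auto
  then show ?thesis
    using i path_valid(2)[OF p] by (simp add: last_conv_nth)
qed

lemma out_degree_source:
  assumes p: "(\<alpha>, vs) \<in> set F" and "w \<in> S"
  shows "card {a. consec vs w a} = (if hd vs = w then 1 else 0)"
proof -
  have "w \<in> set vs \<and> w \<noteq> last vs \<longleftrightarrow> hd vs = w"
    using path_source_at_head[OF p assms(2)] path_ends_differ[OF p] path_valid(2)[OF p]
    by (auto simp: hd_in_set)
  then show ?thesis
    using card_consec_successors[OF path_distinct[OF p]] by simp
qed

lemma in_degree_sink:
  assumes p: "(\<alpha>, vs) \<in> set F" and "w \<in> T"
  shows "card {u. consec vs u w} = (if last vs = w then 1 else 0)"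
proof -
  have "w \<in> set vs \<and> w \<noteq> hd vs \<longleftrightarrow> last vs = w"
    using path_sink_at_last[OF p assms(2)] path_ends_differ[OF p] path_valid(2)[OF p]
    by auto
  then show ?thesis
    using card_consec_predecessors[OF path_distinct[OF p]] by simp
qed

lemma degrees_inner:
  assumes p: "(\<alpha>, vs) \<in> set F" and "w \<notin> S \<union> T"
  shows "card {u. consec vs u w} = card {a. consec vs w a}"
proof -
  have "w \<noteq> hd vs" "w \<noteq> last vs"
    using path_valid(3,4)[OF p] assms(2) by auto
  then show ?thesis
    using card_consec_successors[OF path_distinct[OF p]]
      card_consec_predecessors[OF path_distinct[OF p]] by simp
qed

lemma out_degree_le_count: "(\<alpha>, vs) \<in> set F \<Longrightarrow> card {a. consec vs w a} \<le> count_list vs w"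
  using card_consec_successors[OF path_distinct] count_list_0_iff[of vs w]
  by (cases "w \<in> set vs") auto

definition out_flow :: "'a \<Rightarrow> real" where
  "out_flow w = (\<Sum>a\<in>{a. arc F w a}. fF F w a)"

definition in_flow :: "'a \<Rightarrow> real" where
  "in_flow w = (\<Sum>u\<in>{u. arc F u w}. fF F u w)"

definition out_load :: "'a \<Rightarrow> real" where
  "out_load w = (\<Sum>a\<in>{a. arc F w a}. flF L F w a)"

definition in_load :: "'a \<Rightarrow> real" where
  "in_load w = (\<Sum>u\<in>{u. arc F u w}. flF L F u w)"

definition sent :: "'a \<Rightarrow> real" where
  "sent v = sum_list (map (\<lambda>(\<alpha>, vs). if hd vs = v then \<alpha> else 0) F)"

definition received :: "'a \<Rightarrow> real" where
  "received v = sum_list (map (\<lambda>(\<alpha>, vs). if last vs = v then \<alpha> else 0) F)"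

lemma out_flow_paths: "out_flow w = sum_list (map (\<lambda>(\<alpha>, vs). \<alpha> * card {a. consec vs w a}) F)"
  unfolding out_flow_def fF_def by (rule sum_list_weighted_count) (force simp: arc_def)

lemma in_flow_paths: "in_flow w = sum_list (map (\<lambda>(\<alpha>, vs). \<alpha> * card {u. consec vs u w}) F)"
  unfolding in_flow_def fF_def by (rule sum_list_weighted_count) (force simp: arc_def)

lemma out_load_paths:
  "out_load w = sum_list (map (\<lambda>(\<alpha>, vs). real (L (hd vs)) * \<alpha> * card {a. consec vs w a}) F)"
  unfolding out_load_def flF_def by (rule sum_list_weighted_count) (force simp: arc_def)

lemma in_load_paths:
  "in_load w = sum_list (map (\<lambda>(\<alpha>, vs). real (L (hd vs)) * \<alpha> * card {u. consec vs u w}) F)"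
  unfolding in_load_def flF_def by (rule sum_list_weighted_count) (force simp: arc_def)

lemma out_flow_source: "w \<in> S \<Longrightarrow> out_flow w = sent w"
  unfolding out_flow_paths sent_def
  by (intro arg_cong[where f = sum_list] map_cong) (auto simp: out_degree_source)

lemma out_load_source: "w \<in> S \<Longrightarrow> out_load w = real (L w) * sent w"
  unfolding out_load_paths sent_def sum_list_const_mult[symmetric]
  by (intro arg_cong[where f = sum_list] map_cong) (auto simp: out_degree_source)

lemma in_flow_sink: "w \<in> T \<Longrightarrow> in_flow w = received w"
  unfolding in_flow_paths received_def
  by (intro arg_cong[where f = sum_list] map_cong) (auto simp: in_degree_sink)

lemma in_load_inner: "w \<notin> S \<union> T \<Longrightarrow> in_load w = out_load w"
  unfolding in_load_paths out_load_paths
  by (intro arg_cong[where f = sum_list] map_cong) (auto simp: degrees_inner)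

lemma out_flow_inner_le_one:
  assumes "w \<notin> S \<union> T"
  shows "out_flow w \<le> 1"
proof -
  have "out_flow w \<le> sum_list (map (\<lambda>(\<alpha>, vs). \<alpha> * real (count_list vs w)) F)"
    unfolding out_flow_paths
    by (rule sum_list_mono) (auto intro!: mult_left_mono out_degree_le_count dest: path_valid(1))
  also have "\<dots> \<le> 1"
    using y_flow assms unfolding y_flow_def by auto
  finally show ?thesis .
qed

lemma sent_le: "v \<in> S \<Longrightarrow> sent v \<le> y v"
  using y_flow unfolding y_flow_def sent_def by auto

lemma received_le: "v \<in> T \<Longrightarrow> received v \<le> 1 - y v"
  using y_flow unfolding y_flow_def received_def by auto

text \<open>Every path starts in S and ends in T, so S sends and T receives the total flow.\<close>
lemma total_sent: "(\<Sum>v\<in>S. sent v) = sum_list (map fst F)"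
  unfolding sent_def
  by (subst sum_sum_list_swap, simp, intro arg_cong[where f = sum_list] map_cong)
    (auto simp: sum.delta' dest: path_valid(3))

lemma total_received: "(\<Sum>v\<in>T. received v) = sum_list (map fst F)"
  unfolding received_def
  by (subst sum_sum_list_swap, simp, intro arg_cong[where f = sum_list] map_cong)
    (auto simp: sum.delta' dest: path_valid(4))

lemma fF_nonneg: "0 \<le> fF F u w"
  unfolding fF_def by (rule sum_list_nonneg) (auto dest: path_valid(1))

lemma flF_nonneg: "0 \<le> flF L F u w"
  unfolding flF_def by (rule sum_list_nonneg) (auto dest: path_valid(1))

lemma sent_nonneg: "0 \<le> sent v"
  unfolding sent_def by (rule sum_list_nonneg) (auto dest: path_valid(1))

lemma in_flow_nonneg: "0 \<le> in_flow w"
  unfolding in_flow_def by (rule sum_nonneg) (rule fF_nonneg)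

lemma out_load_nonneg: "0 \<le> out_load w"
  unfolding out_load_def by (rule sum_nonneg) (rule flF_nonneg)

lemma flF_le_fF:
  shows "flF L F u w \<le> real (L u) * fF F u w" and "flF L F u w \<le> real (L w) * fF F u w"
proof -
  have "real (L (hd vs)) * \<alpha> \<le> real (L u) * \<alpha>" and "real (L (hd vs)) * \<alpha> \<le> real (L w) * \<alpha>"
    if "(\<alpha>, vs) \<in> set F" and "consec vs u w" for \<alpha> vs
    using consec_capacity[OF that] path_valid(1)[OF that(1)] by (auto intro: mult_right_mono)
  then show "flF L F u w \<le> real (L u) * fF F u w" and "flF L F u w \<le> real (L w) * fF F u w"
    unfolding flF_def fF_def sum_list_const_mult[symmetric] by (auto intro!: sum_list_mono)
qed

lemma no_arc_into_source: "w \<in> S \<Longrightarrow> {u. arc F u w} = {}"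
  using arc_endpoints(1) by blast

lemma no_arc_out_of_sink: "w \<in> T \<Longrightarrow> {a. arc F w a} = {}"
  using arc_endpoints(2) by blast

end

section \<open>Chain shifting a feasible assignment\<close>

locale chain_shift = acyclic_y_flow L y S T F
  for L :: "'a::finite \<Rightarrow> nat" and y S T F +
  fixes E :: "'a \<Rightarrow> 'a \<Rightarrow> bool" and k :: nat and \<delta> :: enat and x :: "'a \<Rightarrow> 'a \<Rightarrow> real"
  assumes feasible: "feasible E L k \<delta> x y"
begin

lemma
  shows y_total: "(\<Sum>u\<in>UNIV. y u) = real k"
    and x_le_y: "x u v \<le> y u"
    and row_sum_le: "(\<Sum>v\<in>UNIV. x u v) \<le> real (L u) * y u"
    and column_sum: "(\<Sum>u\<in>UNIV. x u v) = 1"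
    and y_nonneg: "0 \<le> y u"
    and y_le_one: "y u \<le> 1"
    and x_far: "\<delta> < gdist E u v \<Longrightarrow> x u v = 0"
    and x_nonneg: "0 \<le> x u v"
  using feasible unfolding feasible_def by blast+

abbreviation shifted_x :: "'a \<Rightarrow> 'a \<Rightarrow> real" where
  "shifted_x \<equiv> shift_x L F x y"

abbreviation shifted_y :: "'a \<Rightarrow> real" where
  "shifted_y \<equiv> shift_y S T F y"

lemma capacity_nonneg: "0 \<le> real (L w) * y w"
  using y_nonneg by simp

lemma x_zero_without_capacity:
  assumes "L u = 0"
  shows "x u v = 0"
proof -
  have "x u v \<le> (\<Sum>v\<in>UNIV. x u v)"
    by (rule member_le_sum) (auto intro: x_nonneg)
  also have "\<dots> \<le> 0"
    using row_sum_le[of u] assms by simp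
  finally show ?thesis
    using x_nonneg[of u v] by simp
qed

text \<open>The flow leaving a vertex never exceeds its opening y: a source sends at most y,
  and any other vertex with an outgoing arc is an inner vertex with y = 1.\<close>
lemma out_flow_le_y: "out_flow w \<le> y w"
proof (cases "w \<in> S")
  case True
  then show ?thesis
    using out_flow_source sent_le by simp
next
  case not_source: False
  show ?thesis
  proof (cases "\<exists>a. arc F w a")
    case True
    then obtain a where a: "arc F w a" ..
    then have "w \<notin> S \<union> T"
      using arc_endpoints(2) not_source by blast
    then show ?thesis
      using out_flow_inner_le_one arc_endpoints(4)[OF a] by simp
  next
    case False
    then have no_out: "{a. arc F w a} = {}"
      by blast
    show ?thesis
      unfolding out_flow_def no_out using y_nonneg by simp
  qed
qed

lemma out_load_le_capacity: "out_load w \<le> real (L w) * y w"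
proof -
  have "out_load w \<le> (\<Sum>a\<in>{a. arc F w a}. real (L w) * fF F w a)"
    unfolding out_load_def by (rule sum_mono) (rule flF_le_fF(1))
  also have "\<dots> = real (L w) * out_flow w"
    unfolding out_flow_def by (simp add: sum_distrib_left)
  also have "\<dots> \<le> real (L w) * y w"
    using out_flow_le_y by (simp add: mult_left_mono)
  finally show ?thesis .
qed

text \<open>The fraction of its load that vertex u passes along the arc (u, w), and the
  fraction of its load that w passes on altogether; chain shifting moves exactly these
  fractions of the assignment of u to w.\<close>

definition share :: "'a \<Rightarrow> 'a \<Rightarrow> real" where
  "share u w = flF L F u w / (real (L u) * y u)"

definition out_share :: "'a \<Rightarrow> real" where
  "out_share w = out_load w / (real (L w) * y w)"

lemma share_nonneg: "0 \<le> share u w"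
  unfolding share_def using flF_nonneg capacity_nonneg by simp

lemma out_share_nonneg: "0 \<le> out_share w"
  unfolding out_share_def using out_load_nonneg capacity_nonneg by simp

lemma out_share_le_one: "out_share w \<le> 1"
proof (cases "real (L w) * y w = 0")
  case True
  show ?thesis
    unfolding out_share_def True by simp
next
  case False
  then have "0 < real (L w) * y w"
    using capacity_nonneg[of w] by linarith
  then show ?thesis
    unfolding out_share_def using out_load_le_capacity[of w] by simp
qed

lemma out_share_mult: "out_share w * (real (L w) * y w) = out_load w"
proof (cases "real (L w) * y w = 0")
  case True
  then have "out_load w = 0"
    using out_load_le_capacity[of w] out_load_nonneg[of w] by linarith
  then show ?thesis
    using True by simp
next
  case False
  then show ?thesis
    by (simp add: out_share_def)
qed

lemma share_le_out_share:
  assumes "arc F u w"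
  shows "share u w \<le> out_share u"
proof -
  have "flF L F u w \<le> out_load u"
    unfolding out_load_def by (rule member_le_sum) (use assms flF_nonneg in auto)
  then show ?thesis
    unfolding share_def out_share_def by (rule divide_right_mono) (rule capacity_nonneg)
qed

lemma share_le_one: "arc F u w \<Longrightarrow> share u w \<le> 1"
  using share_le_out_share out_share_le_one order_trans by blast

lemma share_mult_le: "share u w * (real (L u) * y u) \<le> flF L F u w"
  unfolding share_def using flF_nonneg by (cases "real (L u) * y u = 0") auto

lemma moved_le_fF: "x u v * share u w \<le> fF F u w"
proof (cases "L u = 0")
  case True
  then show ?thesis
    using fF_nonneg by (simp add: share_def)
next
  case False
  then have "real (L u) * (x u v * share u w) \<le> real (L u) * (y u * share u w)"
    by (simp add: mult_right_mono share_nonneg x_le_y)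
  also have "\<dots> \<le> flF L F u w"
    using share_mult_le[of u w] by (simp add: algebra_simps)
  also have "\<dots> \<le> real (L u) * fF F u w"
    by (rule flF_le_fF(1))
  finally show ?thesis
    using False by simp
qed

lemma shifted_x_eq:
  "shifted_x w v = x w v * (1 - out_share w) + (\<Sum>u\<in>{u. arc F u w}. x u v * share u w)"
proof -
  have "(\<Sum>a\<in>{a. arc F w a}. x w v * flF L F w a / (real (L w) * y w)) = x w v * out_share w"
    unfolding out_share_def out_load_def
    by (simp add: sum_divide_distrib[symmetric] sum_distrib_left[symmetric])
  then show ?thesis
    unfolding shift_x_def share_def by (simp add: algebra_simps)
qed

lemma shifted_x_nonneg: "0 \<le> shifted_x w v"
  unfolding shifted_x_eq using x_nonneg out_share_le_one share_nonneg
  by (auto intro!: add_nonneg_nonneg sum_nonneg mult_nonneg_nonneg)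

lemma shifted_x_no_in_arcs: "\<nexists>u. arc F u w \<Longrightarrow> shifted_x w v = x w v * (1 - out_share w)"
  unfolding shifted_x_eq by simp

lemma shifted_x_support:
  assumes "shifted_x w v \<noteq> 0"
  shows "x w v \<noteq> 0 \<or> (\<exists>u. arc F u w \<and> x u v \<noteq> 0)"
proof (rule ccontr)
  assume "\<not> ?thesis"
  then have "x w v = 0" and "\<And>u. arc F u w \<Longrightarrow> x u v = 0"
    by auto
  then have "shifted_x w v = 0"
    unfolding shifted_x_eq by simp
  with assms show False ..
qed

lemma shifted_x_le_in_neighbourhood: "shifted_x w v \<le> x w v + (\<Sum>u\<in>{u. arc F u w}. x u v)"
proof -
  have "x w v * (1 - out_share w) \<le> x w v"
    using x_nonneg out_share_nonneg by (simp add: mult_left_le)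
  moreover have "(\<Sum>u\<in>{u. arc F u w}. x u v * share u w) \<le> (\<Sum>u\<in>{u. arc F u w}. x u v)"
    by (rule sum_mono) (use x_nonneg share_le_one in \<open>auto intro: mult_left_le\<close>)
  ultimately show ?thesis
    unfolding shifted_x_eq by simp
qed

lemma shifted_y_source: "w \<in> S \<Longrightarrow> shifted_y w = y w - sent w"
  using out_flow_source unfolding shift_y_def out_flow_def by simp

lemma shifted_y_sink: "w \<in> T \<Longrightarrow> shifted_y w = y w + in_flow w"
  using disjoint unfolding shift_y_def in_flow_def by auto

lemma shifted_y_inner: "w \<notin> S \<union> T \<Longrightarrow> shifted_y w = y w"
  unfolding shift_y_def by simp

lemma shifted_y_eq:
  "shifted_y w = y w - (if w \<in> S then sent w else 0) + (if w \<in> T then received w else 0)"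
  using shifted_y_source shifted_y_sink in_flow_sink shifted_y_inner disjoint by auto

text \<open>Constraint (1): the sources lose and the sinks gain the total flow value.\<close>
lemma shifted_y_total: "(\<Sum>w\<in>UNIV. shifted_y w) = real k"
proof -
  have "(\<Sum>w\<in>UNIV. shifted_y w) = (\<Sum>w\<in>UNIV. y w)
      - (\<Sum>w\<in>UNIV. if w \<in> S then sent w else 0) + (\<Sum>w\<in>UNIV. if w \<in> T then received w else 0)"
    unfolding shifted_y_eq by (simp add: sum.distrib sum_subtractf)
  also have "(\<Sum>w\<in>UNIV. if w \<in> S then sent w else 0) = (\<Sum>w\<in>S. sent w)"
    using sum.inter_filter[of UNIV sent "\<lambda>w. w \<in> S"] by simp
  also have "(\<Sum>w\<in>UNIV. if w \<in> T then received w else 0) = (\<Sum>w\<in>T. received w)"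
    using sum.inter_filter[of UNIV received "\<lambda>w. w \<in> T"] by simp
  finally show ?thesis
    using y_total total_sent total_received by simp
qed

lemma shifted_y_bounds: "0 \<le> shifted_y w \<and> shifted_y w \<le> 1"
proof -
  consider "w \<in> S" | "w \<in> T" | "w \<notin> S \<union> T"
    by blast
  then show ?thesis
  proof cases
    case 1
    then show ?thesis
      using shifted_y_source[OF 1] sent_le[OF 1] sent_nonneg[of w] y_le_one[of w] by simp
  next
    case 2
    then show ?thesis
      using shifted_y_sink[OF 2] in_flow_sink[OF 2] received_le[OF 2] y_nonneg[of w]
        in_flow_nonneg[of w] by simp
  next
    case 3
    then show ?thesis
      using shifted_y_inner[OF 3] y_nonneg[of w] y_le_one[of w] by simp
  qed
qed

text \<open>Constraint (2), case by case: a source loses the same fraction of y as of its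
  assignment, a sink receives at most the incoming flow, and an inner vertex with an
  incoming arc has y = 1.\<close>
lemma shifted_x_le_shifted_y_source:
  assumes "w \<in> S"
  shows "shifted_x w v \<le> shifted_y w"
proof (cases "L w = 0")
  case True
  then show ?thesis
    using shifted_x_no_in_arcs no_arc_into_source[OF assms] x_zero_without_capacity
      shifted_y_source[OF assms] sent_le[OF assms] by simp
next
  case False
  have "real (L w) * (y w * out_share w) = real (L w) * sent w"
    using out_share_mult[of w] out_load_source[OF assms] by (simp add: algebra_simps)
  then have sent_eq: "y w * out_share w = sent w"
    using False by simp
  have "shifted_x w v = x w v * (1 - out_share w)"
    using shifted_x_no_in_arcs no_arc_into_source[OF assms] by simp
  also have "\<dots> \<le> y w * (1 - out_share w)"
    using x_le_y out_share_le_one by (simp add: mult_right_mono)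
  also have "\<dots> = shifted_y w"
    using sent_eq shifted_y_source[OF assms] by (simp add: algebra_simps)
  finally show ?thesis .
qed

lemma shifted_x_le_shifted_y_sink:
  assumes "w \<in> T"
  shows "shifted_x w v \<le> shifted_y w"
proof -
  have "out_share w = 0"
    unfolding out_share_def out_load_def no_arc_out_of_sink[OF assms] by simp
  then have "shifted_x w v = x w v + (\<Sum>u\<in>{u. arc F u w}. x u v * share u w)"
    unfolding shifted_x_eq by simp
  also have "\<dots> \<le> y w + in_flow w"
    unfolding in_flow_def using x_le_y moved_le_fF by (simp add: add_mono sum_mono)
  finally show ?thesis
    using shifted_y_sink[OF assms] by simp
qed

lemma shifted_x_le_shifted_y_inner:
  assumes "w \<notin> S \<union> T"
  shows "shifted_x w v \<le> shifted_y w"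
proof (cases "\<exists>u. arc F u w")
  case True
  then have "y w = 1"
    using arc_endpoints(3) assms by blast
  have "shifted_x w v \<le> x w v + (\<Sum>u\<in>{u. arc F u w}. x u v)"
    by (rule shifted_x_le_in_neighbourhood)
  also have "\<dots> = (\<Sum>u\<in>insert w {u. arc F u w}. x u v)"
    using arc_irreflexive[of w] by simp
  also have "\<dots> \<le> (\<Sum>u\<in>UNIV. x u v)"
    by (rule sum_mono2) (use x_nonneg in auto)
  also have "\<dots> = shifted_y w"
    using column_sum shifted_y_inner[OF assms] \<open>y w = 1\<close> by simp
  finally show ?thesis .
next
  case False
  then show ?thesis
    using shifted_x_no_in_arcs shifted_y_inner[OF assms] x_le_y[of w v] x_nonneg[of w v]
      out_share_nonneg[of w] by (smt (verit) mult_left_le)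
qed

lemma shifted_x_le_shifted_y: "shifted_x w v \<le> shifted_y w"
  using shifted_x_le_shifted_y_source shifted_x_le_shifted_y_sink shifted_x_le_shifted_y_inner
  by blast

text \<open>Constraint (3): the load of w afterwards is at most its old capacity minus the
  load it passes on plus the load it receives, and this balance is at most the new
  capacity.\<close>
lemma shifted_row_sum_le_balance:
  "(\<Sum>v\<in>UNIV. shifted_x w v) \<le> real (L w) * y w - out_load w + in_load w"
proof -
  have "(\<Sum>v\<in>UNIV. shifted_x w v)
      = (1 - out_share w) * (\<Sum>v\<in>UNIV. x w v) + (\<Sum>u\<in>{u. arc F u w}. (\<Sum>v\<in>UNIV. x u v) * share u w)"
  proof -
    have "(\<Sum>v\<in>UNIV. shifted_x w v) = (\<Sum>v\<in>UNIV. x w v * (1 - out_share w))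
        + (\<Sum>v\<in>UNIV. \<Sum>u\<in>{u. arc F u w}. x u v * share u w)"
      unfolding shifted_x_eq by (rule sum.distrib)
    also have "(\<Sum>v\<in>UNIV. x w v * (1 - out_share w)) = (1 - out_share w) * (\<Sum>v\<in>UNIV. x w v)"
      by (metis mult.commute sum_distrib_right)
    also have "(\<Sum>v\<in>UNIV. \<Sum>u\<in>{u. arc F u w}. x u v * share u w)
        = (\<Sum>u\<in>{u. arc F u w}. (\<Sum>v\<in>UNIV. x u v) * share u w)"
      by (subst sum.swap) (simp add: sum_distrib_right)
    finally show ?thesis .
  qed
  also have "\<dots> \<le> (1 - out_share w) * (real (L w) * y w) + in_load w"
  proof (rule add_mono)
    show "(1 - out_share w) * (\<Sum>v\<in>UNIV. x w v) \<le> (1 - out_share w) * (real (L w) * y w)"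
      using row_sum_le out_share_le_one by (simp add: mult_left_mono)
    have "(\<Sum>v\<in>UNIV. x u v) * share u w \<le> flF L F u w" for u
    proof -
      have "(\<Sum>v\<in>UNIV. x u v) * share u w \<le> (real (L u) * y u) * share u w"
        by (rule mult_right_mono[OF row_sum_le share_nonneg])
      also have "\<dots> \<le> flF L F u w"
        using share_mult_le[of u w] by (simp add: mult.commute)
      finally show ?thesis .
    qed
    then show "(\<Sum>u\<in>{u. arc F u w}. (\<Sum>v\<in>UNIV. x u v) * share u w) \<le> in_load w"
      unfolding in_load_def by (rule sum_mono)
  qed
  also have "\<dots> = real (L w) * y w - out_load w + in_load w"
    using out_share_mult[of w] by (simp add: algebra_simps)
  finally show ?thesis .
qed

lemma balance_le_shifted_capacity:
  "real (L w) * y w - out_load w + in_load w \<le> real (L w) * shifted_y w"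
proof -
  consider "w \<in> S" | "w \<in> T" | "w \<notin> S \<union> T"
    by blast
  then show ?thesis
  proof cases
    case 1
    then show ?thesis
      using out_load_source[OF 1] shifted_y_source[OF 1]
      unfolding in_load_def no_arc_into_source[OF 1] by (simp add: right_diff_distrib)
  next
    case 2
    have "in_load w \<le> real (L w) * in_flow w"
      unfolding in_load_def in_flow_def sum_distrib_left by (rule sum_mono) (rule flF_le_fF(2))
    then show ?thesis
      using shifted_y_sink[OF 2]
      unfolding out_load_def no_arc_out_of_sink[OF 2] by (simp add: algebra_simps)
  next
    case 3
    then show ?thesis
      using in_load_inner[OF 3] shifted_y_inner[OF 3] by simp
  qed
qed

lemma shifted_row_sum_le: "(\<Sum>v\<in>UNIV. shifted_x w v) \<le> real (L w) * shifted_y w"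
  using shifted_row_sum_le_balance balance_le_shifted_capacity order_trans by blast

text \<open>Constraint (4): what a vertex passes on along its out-arcs is exactly what its
  out-neighbours receive from it, so every column sum is preserved.\<close>
lemma shifted_column_sum: "(\<Sum>w\<in>UNIV. shifted_x w v) = 1"
proof -
  let ?moved = "\<lambda>u w. x u v * flF L F u w / (real (L u) * y u)"
  have "(\<Sum>w\<in>UNIV. \<Sum>u\<in>{u. arc F u w}. ?moved u w) = (\<Sum>u\<in>UNIV. \<Sum>w\<in>{w. arc F u w}. ?moved u w)"
    using sum.swap_restrict[of UNIV UNIV ?moved "arc F"] by simp
  then show ?thesis
    unfolding shift_x_def using column_sum[of v] by (simp add: sum.distrib sum_subtractf)
qed

text \<open>Constraint (6): w only becomes assigned to v through an arc (u, w) with u assigned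
  to v, so assignment distances grow by at most the length of an arc.\<close>
lemma shifted_x_far:
  assumes "symp E" and arc_dist: "\<And>u w. arc F u w \<Longrightarrow> gdist E u w \<le> d"
    and far: "\<delta> + d < gdist E w v"
  shows "shifted_x w v = 0"
proof (rule ccontr)
  assume "shifted_x w v \<noteq> 0"
  then consider "x w v \<noteq> 0" | u where "arc F u w" and "x u v \<noteq> 0"
    using shifted_x_support by blast
  then show False
  proof cases
    case 1
    then have "gdist E w v \<le> \<delta>"
      using x_far not_le by blast
    also have "\<dots> \<le> \<delta> + d"
      by simp
    finally show False
      using far by simp
  next
    case 2
    have "gdist E u v \<le> \<delta>"
      using x_far 2(2) not_le by blast
    have "gdist E w v \<le> gdist E w u + gdist E u v"
      by (rule gdist_triangle)
    also have "\<dots> \<le> d + \<delta>"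
      using arc_dist[OF 2(1)] gdist_sym[OF assms(1), of w u] \<open>gdist E u v \<le> \<delta>\<close>
      by (simp add: add_mono)
    finally show False
      using far by (simp add: add.commute)
  qed
qed

theorem shift_feasible:
  assumes "symp E" and "\<And>u w. arc F u w \<Longrightarrow> gdist E u w \<le> d"
  shows "feasible E L k (\<delta> + d) shifted_x shifted_y"
  unfolding feasible_def
  using shifted_y_total shifted_x_le_shifted_y shifted_row_sum_le shifted_column_sum
    shifted_y_bounds shifted_x_far[OF assms] shifted_x_nonneg
  by (intro conjI allI impI) simp_all

text \<open>A vertex without in-arcs keeps a fraction of its own assignment and nothing else.\<close>
lemma radius_shift_no_in_arcs:
  assumes "\<nexists>u. arc F u v"
  shows "radius E shifted_x v \<le> radius E x v"
proof (rule radius_mono_support)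
  fix w
  assume "0 < shifted_x v w"
  then have "x v w \<noteq> 0"
    using shifted_x_no_in_arcs[OF assms] by auto
  then show "0 < x v w"
    using x_nonneg[of v w] by simp
qed

text \<open>Everything newly assigned to v was assigned to an in-neighbour a of v, hence lies
  within distance radius(a) + dist(a, v) of v.\<close>
lemma radius_shift_bound:
  assumes "symp E" and "\<delta> \<noteq> \<infinity>"
  shows "enat (radius E shifted_x v)
    \<le> max (enat (radius E x v)) (Sup {enat (radius E x a) + gdist E a v | a. arc F a v})"
proof -
  consider "radius E shifted_x v = 0"
    | w where "gdist E w v = enat (radius E shifted_x v)" and "0 < shifted_x v w"
    using radius_attained[of E shifted_x v] by auto
  then show ?thesis
  proof cases
    case 1
    then show ?thesis
      by (simp add: zero_enat_def[symmetric])
  next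
    case 2
    note w = 2
    consider "x v w \<noteq> 0" | a where "arc F a v" and "x a w \<noteq> 0"
      using shifted_x_support[of v w] w(2) by auto
    then show ?thesis
    proof cases
      case 1
      then have "radius E shifted_x v \<le> radius E x v"
        using radius_ge[OF _ w(1)] x_nonneg[of v w] by simp
      then show ?thesis
        by (simp add: le_max_iff_disj)
    next
      case 2
      have "gdist E w a \<le> \<delta>"
        using x_far[of a w] 2(2) gdist_sym[OF assms(1), of w a] not_le by auto
      with assms(2) obtain j where j: "gdist E w a = enat j"
        by (cases "gdist E w a") auto
      have "j \<le> radius E x a"
        using radius_ge[OF _ j] 2(2) x_nonneg[of a w] by simp
      have "enat (radius E shifted_x v) = gdist E w v"
        using w(1) by simp
      also have "\<dots> \<le> gdist E w a + gdist E a v"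
        by (rule gdist_triangle)
      also have "\<dots> \<le> enat (radius E x a) + gdist E a v"
        using j \<open>j \<le> radius E x a\<close> by (simp add: add_right_mono)
      also have "\<dots> \<le> Sup {enat (radius E x a) + gdist E a v | a. arc F a v}"
        by (rule Sup_upper) (use 2(1) in blast)
      finally show ?thesis
        by (simp add: le_max_iff_disj)
    qed
  qed
qed

end

theorem mainTheorem12:
  fixes E :: "'a::finite \<Rightarrow> 'a \<Rightarrow> bool"
    and L :: "'a \<Rightarrow> nat" and k :: nat and \<delta> :: nat
    and x :: "'a \<Rightarrow> 'a \<Rightarrow> real" and y :: "'a \<Rightarrow> real"
    and S T :: "'a set" and F :: "'a flow"
  assumes "symp E"
    and "k > 0"
    and "feasible E L k (enat \<delta>) x y"
    and "S \<inter> T = {}"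
    and "y_flow L y S T F"
    and "flow_acyclic F"
  defines "x' \<equiv> shift_x L F x y"
    and "y' \<equiv> shift_y S T F y"
    and "d \<equiv> Sup {gdist E u w | u w. arc F u w}"
  shows "feasible E L k (enat \<delta> + d) x' y'
    \<and> (\<forall>v. (\<nexists>u. arc F u v) \<longrightarrow> radius E x' v \<le> radius E x v)
    \<and> (\<forall>v. (\<exists>u. arc F u v) \<longrightarrow>
           enat (radius E x' v) \<le> max (enat (radius E x v))
             (Sup {enat (radius E x a) + gdist E a v | a. arc F a v}))
    \<and> (\<forall>v. v \<notin> S \<union> T \<longrightarrow> y' v = y v)"
proof -
  interpret chain_shift L y S T F E k "enat \<delta>" x
    by unfold_locales (use assms(3-6) in auto)
  have arc_dist: "gdist E u w \<le> d" if "arc F u w" for u w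
    unfolding d_def by (rule Sup_upper) (use that in blast)
  have "feasible E L k (enat \<delta> + d) x' y'"
    unfolding x'_def y'_def by (rule shift_feasible[OF assms(1) arc_dist])
  moreover have "radius E x' v \<le> radius E x v" if "\<nexists>u. arc F u v" for v
    unfolding x'_def using that by (rule radius_shift_no_in_arcs)
  moreover have "enat (radius E x' v)
      \<le> max (enat (radius E x v)) (Sup {enat (radius E x a) + gdist E a v | a. arc F a v})" for v
    unfolding x'_def by (rule radius_shift_bound[OF assms(1)]) simp
  moreover have "y' v = y v" if "v \<notin> S \<union> T" for v
    unfolding y'_def using that by (rule shifted_y_inner)
  ultimately show ?thesis
    by blast
qed

end
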